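(* Let $p>0$ and let $\lambda,\mu$ be finite Borel measures on $\mathbb{S}^{n-1}$ such that $\lambda$ is absolutely continuous with respect to spherical Lebesgue measure, $\lambda(A)>0$ for every nonempty open set $A\subset\mathbb{S}^{n-1}$, and $\mu$ is not concentrated in any closed hemisphere of $\mathbb{S}^{n-1}$. Then there exists a convex body $K_0\in\mathcal{K}^n_0$ such that $$\sup\{\Phi_{\lambda,\mu,p}(\rho_K):K\in\mathcal{K}^n_0\}=\Phi_{\lambda,\mu,p}(\rho_{K_0}).$$
   Context: $\mathcal{K}^n_0$ is the set of compact convex subsets of $\mathbb{R}^n$ containing the origin in their interior; for $K\in\mathcal{K}^n_0$, $h_K(x)=\max_{y\in K}\langle y,x\rangle$ and $\rho_K(u)=\max\{t>0:tu\in K\}$. For a positive continuous function $f$ on $\mathbb{S}^{n-1}$, $\langle f\rangle=\mathrm{conv}\{f(u)u:u\in\mathbb{S}^{n-1}\}$. For a measure $\nu$, $|\nu|$ denotes its total mass. The functional is $$\Phi_{\lambda,\mu,p}(f)=-\frac{1}{|\lambda|}\int_{\mathbb{S}^{n-1}}\log h_{\langle f\rangle}(x)\,d\lambda(x)-\frac1p\log\Big(\frac{1}{|\mu|}\int_{\mathbb{S}^{n-1}}f^{-p}(u)\,d\mu(u)\Big).$$ *)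

theory Defs
  imports "HOL-Analysis.Analysis"
begin

definition convex_body0 :: "'a::euclidean_space set \<Rightarrow> bool" where
  "convex_body0 K \<longleftrightarrow> compact K \<and> convex K \<and> 0 \<in> interior K"

definition support_fun :: "'a::euclidean_space set \<Rightarrow> 'a \<Rightarrow> real" where
  "support_fun K x = Sup ((\<lambda>y. y \<bullet> x) ` K)"

definition radial_fun :: "'a::euclidean_space set \<Rightarrow> 'a \<Rightarrow> real" where
  "radial_fun K u = Sup {t. t > 0 \<and> t *\<^sub>R u \<in> K}"

definition hull_of :: "('a::euclidean_space \<Rightarrow> real) \<Rightarrow> 'a set" where
  "hull_of f = convex hull ((\<lambda>u. f u *\<^sub>R u) ` sphere 0 1)"

text \<open>Spherical Lebesgue measure, as a Borel measure on the ambient space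
  concentrated on the unit sphere: sigma(A) = n * Lebesgue measure of the cone
  {x in open unit ball : x / |x| in A}.\<close>
definition sphere_measure :: "'a::euclidean_space measure" where
  "sphere_measure =
     density (distr (restrict_space lborel (ball 0 1)) borel (\<lambda>x. x /\<^sub>R norm x))
             (\<lambda>_. ennreal (real DIM('a)))"

definition total_mass :: "'a measure \<Rightarrow> real" where
  "total_mass M = measure M (space M)"

definition Phi :: "'a::euclidean_space measure \<Rightarrow> 'a measure \<Rightarrow> real \<Rightarrow> ('a \<Rightarrow> real) \<Rightarrow> real" where
  "Phi lam mu p f =
     - (1 / total_mass lam) * (\<integral>x. ln (support_fun (hull_of f) x) \<partial>lam)
     - (1 / p) * ln ((1 / total_mass mu) * (\<integral>u. f u powr (- p) \<partial>mu))"

end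

theory Submission
  imports Defs "HOL-Complex_Analysis.Great_Picard"
begin

(* Write h_K for the support function and rho_K for the radial function of K.  Since the hull
   of rho_K is K itself, Phi(rho_K) is computed from h_K and rho_K, and it changes by at most
   log(beta/alpha) when h_K is bounded below by alpha h_L and rho_K above by beta rho_L; in
   particular it is invariant under dilations.  Uniform lower bounds for the lambda- and
   mu-measures of spherical caps give Phi(rho_K) <= C - theta log(R/r), with R the largest norm
   of a point of K and r the minimum of h_K on the sphere.  So Phi is bounded above, and
   maximizing bodies, rescaled to R = 1, have support functions in [m, 1] that are 1-Lipschitz.
   By Arzela-Ascoli a subsequence converges uniformly to some G, and the Wulff shape
   {y. y.x <= G x on the sphere} attains the supremum, because support functions that are
   uniformly close to a multiple of G give values of Phi close to the value at the Wulff shape. *)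

section \<open>Support and radial functions of convex bodies\<close>

lemma support_fun_ge:
  fixes K :: "'a::euclidean_space set"
  assumes "compact K" "y \<in> K"
  shows "y \<bullet> x \<le> support_fun K x"
proof -
  have "bdd_above ((\<lambda>y. y \<bullet> x) ` K)"
    by (intro bounded_imp_bdd_above compact_imp_bounded compact_continuous_image
        continuous_intros assms(1))
  then show ?thesis
    unfolding support_fun_def using assms(2) by (intro cSup_upper) auto
qed

lemma support_fun_attained:
  fixes K :: "'a::euclidean_space set"
  assumes "compact K" "K \<noteq> {}"
  obtains y where "y \<in> K" "support_fun K x = y \<bullet> x"
proof -
  have "compact ((\<lambda>y. y \<bullet> x) ` K)"
    by (intro compact_continuous_image continuous_intros assms(1))
  then obtain y where y: "y \<in> K" "\<forall>z\<in>K. z \<bullet> x \<le> y \<bullet> x"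
    using compact_attains_sup[of "(\<lambda>y. y \<bullet> x) ` K"] assms(2) by auto
  have "support_fun K x = y \<bullet> x"
    unfolding support_fun_def using y by (intro cSup_eq_maximum) auto
  with y(1) show ?thesis by (rule that)
qed

lemma support_fun_le_norm:
  fixes K :: "'a::euclidean_space set"
  assumes "compact K" "K \<noteq> {}" "K \<subseteq> cball 0 R"
  shows "support_fun K x \<le> R * norm x"
proof -
  obtain y where y: "y \<in> K" "support_fun K x = y \<bullet> x"
    using support_fun_attained[OF assms(1,2)] .
  have "y \<bullet> x \<le> norm y * norm x" by (rule norm_cauchy_schwarz)
  also have "\<dots> \<le> R * norm x" using assms(3) y(1) by (intro mult_right_mono) auto
  finally show ?thesis using y(2) by simp
qed

lemma support_fun_lipschitz:
  fixes K :: "'a::euclidean_space set"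
  assumes "compact K" "K \<noteq> {}" "K \<subseteq> cball 0 R"
  shows "\<bar>support_fun K x - support_fun K x'\<bar> \<le> R * norm (x - x')"
proof -
  have le: "support_fun K x - support_fun K x' \<le> R * norm (x - x')" for x x'
  proof -
    obtain y where y: "y \<in> K" "support_fun K x = y \<bullet> x"
      using support_fun_attained[OF assms(1,2)] .
    have "y \<bullet> x = y \<bullet> x' + y \<bullet> (x - x')" by (simp add: inner_diff_right)
    also have "y \<bullet> (x - x') \<le> norm y * norm (x - x')" by (rule norm_cauchy_schwarz)
    also have "\<dots> \<le> R * norm (x - x')" using assms(3) y(1) by (intro mult_right_mono) auto
    finally show ?thesis using support_fun_ge[OF assms(1) y(1), of x'] y(2) by linarith
  qed
  show ?thesis using le[of x x'] le[of x' x] by (simp add: norm_minus_commute)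
qed

lemma continuous_on_support_fun:
  fixes K :: "'a::euclidean_space set"
  assumes "compact K" "K \<noteq> {}"
  shows "continuous_on A (support_fun K)"
proof -
  obtain R where "R > 0" "K \<subseteq> cball 0 R"
    using compact_imp_bounded[OF assms(1)] bounded_pos by (metis mem_cball_0 subsetI)
  then have "R-lipschitz_on A (support_fun K)"
    using support_fun_lipschitz[OF assms]
    by (intro lipschitz_onI) (auto simp: dist_real_def dist_norm)
  then show ?thesis by (rule lipschitz_on_continuous_on)
qed

lemma convex_body0D:
  assumes "convex_body0 K"
  shows "compact K" "convex K" "0 \<in> K" "K \<noteq> {}"
  using assms interior_subset by (auto simp: convex_body0_def)

lemma convex_body0_cball: "0 < r \<Longrightarrow> convex_body0 (cball (0::'a::euclidean_space) r)"
  unfolding convex_body0_def by (simp add: interior_cball)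

lemma convex_body0_ball_subset:
  assumes "convex_body0 K"
  obtains e where "e > 0" "ball 0 e \<subseteq> K"
  using assms that by (auto simp: convex_body0_def mem_interior)

lemma convex_body0_subset_cball:
  assumes "convex_body0 K"
  obtains R where "R > 0" "K \<subseteq> cball 0 R"
proof -
  obtain R where "R > 0" "\<forall>x\<in>K. norm x \<le> R"
    using compact_imp_bounded[OF convex_body0D(1)[OF assms]] bounded_pos by metis
  then show ?thesis using that by (auto simp: subset_iff)
qed

lemma
  fixes K :: "'a::euclidean_space set"
  assumes K: "convex_body0 K" and "x \<noteq> 0"
  shows radial_fun_pos: "0 < radial_fun K x"
    and radial_fun_scaleR_mem: "radial_fun K x *\<^sub>R x \<in> K"
    and le_radial_fun_iff: "0 < a \<Longrightarrow> a \<le> radial_fun K x \<longleftrightarrow> a *\<^sub>R x \<in> K"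
proof -
  define T where "T = {t. t > 0 \<and> t *\<^sub>R x \<in> K}"
  have rf: "radial_fun K x = Sup T" by (simp add: radial_fun_def T_def)
  obtain e where e: "e > 0" "ball 0 e \<subseteq> K" using convex_body0_ball_subset[OF K] .
  obtain R where R: "K \<subseteq> cball 0 R" using convex_body0_subset_cball[OF K] .
  have nx: "norm x > 0" using assms(2) by simp
  define t0 where "t0 = e / (2 * norm x)"
  have t0: "t0 \<in> T" using e nx by (auto simp: T_def t0_def)
  have "t \<le> R / norm x" if "t \<in> T" for t
    using that R nx by (auto simp: T_def field_simps)
  then have bdd: "bdd_above T" by (auto simp: bdd_above_def)
  show pos: "0 < radial_fun K x"
    using cSup_upper[OF t0 bdd] t0 rf by (simp add: T_def)
  have "closed ((\<lambda>t::real. t *\<^sub>R x) -` K)"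
    using convex_body0D(1)[OF K]
    by (intro continuous_closed_vimage compact_imp_closed) (auto intro!: continuous_intros)
  moreover have "T \<subseteq> (\<lambda>t::real. t *\<^sub>R x) -` K" by (auto simp: T_def)
  ultimately have "Sup T \<in> (\<lambda>t::real. t *\<^sub>R x) -` K"
    using closure_contains_Sup[OF _ bdd] t0 closure_minimal by blast
  then show mem: "radial_fun K x *\<^sub>R x \<in> K" using rf by simp
  show "a \<le> radial_fun K x \<longleftrightarrow> a *\<^sub>R x \<in> K" if a: "0 < a"
  proof
    assume "a \<le> radial_fun K x"
    then have "a *\<^sub>R x = (a / radial_fun K x) *\<^sub>R (radial_fun K x *\<^sub>R x) + (1 - a / radial_fun K x) *\<^sub>R 0"
      using pos by simp
    also have "\<dots> \<in> K"
      using a pos mem convex_body0D(2,3)[OF K] \<open>a \<le> radial_fun K x\<close> by (intro convexD) auto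
    finally show "a *\<^sub>R x \<in> K" .
  next
    assume "a *\<^sub>R x \<in> K"
    then show "a \<le> radial_fun K x" using cSup_upper[OF _ bdd] a rf by (simp add: T_def)
  qed
qed

lemma scaleR_mem_hull_of: "u \<in> sphere 0 1 \<Longrightarrow> f u *\<^sub>R u \<in> hull_of f"
  unfolding hull_of_def by (intro hull_inc imageI)

lemma zero_mem_hull_of:
  fixes f :: "'a::euclidean_space \<Rightarrow> real"
  assumes pos: "\<And>u. u \<in> sphere 0 1 \<Longrightarrow> 0 < f u"
  shows "0 \<in> hull_of f"
proof -
  obtain u :: 'a where u: "u \<in> sphere 0 1" "- u \<in> sphere 0 1"
    using vector_choose_size[of 1] by auto
  define a b where "a = f u" and "b = f (- u)"
  have ab: "0 < a" "0 < b" using pos u by (auto simp: a_def b_def)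
  \<comment> \<open>the origin lies on the chord joining the points in the directions u and -u\<close>
  have "0 = (b / (a + b)) *\<^sub>R (a *\<^sub>R u) + (1 - b / (a + b)) *\<^sub>R (b *\<^sub>R (- u))"
    using ab by (simp add: field_simps scaleR_add_left[symmetric] del: scaleR_add_left)
  also have "\<dots> \<in> hull_of f"
    using ab scaleR_mem_hull_of[OF u(1)] scaleR_mem_hull_of[OF u(2)]
    unfolding hull_of_def by (intro convexD convex_convex_hull) (auto simp: a_def b_def)
  finally show ?thesis .
qed

lemma hull_of_radial_fun:
  fixes K :: "'a::euclidean_space set"
  assumes K: "convex_body0 K"
  shows "hull_of (radial_fun K) = K"
proof
  have "(\<lambda>u. radial_fun K u *\<^sub>R u) ` sphere 0 1 \<subseteq> K"
    by (auto intro!: radial_fun_scaleR_mem[OF K])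
  then show "hull_of (radial_fun K) \<subseteq> K"
    unfolding hull_of_def by (rule hull_minimal) (rule convex_body0D(2)[OF K])
next
  have zero: "0 \<in> hull_of (radial_fun K)"
    by (intro zero_mem_hull_of radial_fun_pos[OF K]) auto
  show "K \<subseteq> hull_of (radial_fun K)"
  proof
    fix x assume x: "x \<in> K"
    show "x \<in> hull_of (radial_fun K)"
    proof (cases "x = 0")
      case False
      define v where "v = x /\<^sub>R norm x"
      have v: "v \<in> sphere 0 1" "v \<noteq> 0" using False by (auto simp: v_def)
      have le: "norm x \<le> radial_fun K v"
        using le_radial_fun_iff[OF K v(2), of "norm x"] x False by (simp add: v_def)
      have "x = (norm x / radial_fun K v) *\<^sub>R (radial_fun K v *\<^sub>R v)
          + (1 - norm x / radial_fun K v) *\<^sub>R 0"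
        using radial_fun_pos[OF K v(2)] False by (simp add: v_def)
      also have "\<dots> \<in> hull_of (radial_fun K)"
        using le radial_fun_pos[OF K v(2)] scaleR_mem_hull_of[OF v(1)] zero
        unfolding hull_of_def by (intro convexD convex_convex_hull) auto
      finally show ?thesis .
    qed (use zero in simp)
  qed
qed

lemma borel_measurable_radial_fun:
  fixes K :: "'a::euclidean_space set"
  assumes K: "convex_body0 K"
  shows "radial_fun K \<in> borel_measurable borel"
proof -
  have "{w. a \<le> radial_fun K w} \<in> sets borel" for a
  proof -
    have "{w. a \<le> radial_fun K w} - {0} \<in> sets borel"
    proof (cases "a > 0")
      case True
      then have "{w. a \<le> radial_fun K w} - {0} = (\<lambda>w. a *\<^sub>R w) -` K - {0}"
        using le_radial_fun_iff[OF K] by auto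
      moreover have "closed ((\<lambda>w::'a. a *\<^sub>R w) -` K)"
        using convex_body0D(1)[OF K]
        by (intro continuous_closed_vimage compact_imp_closed) (auto intro!: continuous_intros)
      ultimately show ?thesis by auto
    next
      case False
      then have "{w. a \<le> radial_fun K w} - {0} = - {0}"
        using radial_fun_pos[OF K] by (auto simp: not_less intro: order.trans less_imp_le)
      then show ?thesis by auto
    qed
    moreover have "{w. a \<le> radial_fun K w} \<inter> {0} \<in> sets borel"
      by (cases "a \<le> radial_fun K 0") auto
    ultimately show ?thesis by (metis Int_Diff_Un sets.Un)
  qed
  then show ?thesis by (simp add: borel_measurable_iff_ge)
qed

lemma convex_body0_bounds_on_sphere:
  fixes K :: "'a::euclidean_space set"
  assumes K: "convex_body0 K"
  obtains m R where "0 < m"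
    "\<And>x. x \<in> sphere 0 1 \<Longrightarrow> m \<le> support_fun K x \<and> support_fun K x \<le> R"
    "\<And>x. x \<in> sphere 0 1 \<Longrightarrow> m \<le> radial_fun K x \<and> radial_fun K x \<le> R"
proof -
  obtain e where e: "e > 0" "ball 0 e \<subseteq> K" using convex_body0_ball_subset[OF K] .
  obtain R where R: "K \<subseteq> cball 0 R" using convex_body0_subset_cball[OF K] .
  show ?thesis
  proof (rule that[of "e / 2" R])
    show "0 < e / 2" using e by simp
  next
    fix x :: 'a assume x: "x \<in> sphere 0 1"
    then have x0: "x \<noteq> 0" by auto
    have in_ball: "(e / 2) *\<^sub>R x \<in> K" using e x by (intro subsetD[OF e(2)]) auto
    show "e / 2 \<le> support_fun K x \<and> support_fun K x \<le> R"
      using support_fun_ge[OF convex_body0D(1)[OF K] in_ball, of x] x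
        support_fun_le_norm[OF convex_body0D(1,4)[OF K] R, of x]
      by (simp add: inner_commute dot_square_norm)
    have "radial_fun K x *\<^sub>R x \<in> cball 0 R" using radial_fun_scaleR_mem[OF K x0] R by auto
    then show "e / 2 \<le> radial_fun K x \<and> radial_fun K x \<le> R"
      using le_radial_fun_iff[OF K x0, of "e / 2"] in_ball e x radial_fun_pos[OF K x0] by simp
  qed
qed

lemma convex_body0_farthest_point:
  fixes K :: "'a::euclidean_space set"
  assumes K: "convex_body0 K"
  obtains y0 where "y0 \<in> K" "y0 \<noteq> 0" "K \<subseteq> cball 0 (norm y0)"
proof -
  have "compact (norm ` K)" by (intro compact_continuous_image convex_body0D(1)[OF K] continuous_intros)
  then obtain y0 where y0: "y0 \<in> K" "\<forall>y\<in>K. norm y \<le> norm y0"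
    using compact_attains_sup[of "norm ` K"] convex_body0D(4)[OF K] by auto
  obtain e where e: "e > 0" "ball 0 e \<subseteq> K" using convex_body0_ball_subset[OF K] .
  obtain u :: 'a where u: "u \<in> sphere 0 1" using vector_choose_size[of 1] by auto
  have "(e / 2) *\<^sub>R u \<in> K" using e u by (intro subsetD[OF e(2)]) auto
  then have "y0 \<noteq> 0" using y0(2) e u by auto
  then show ?thesis using y0 by (intro that) auto
qed

lemma convex_body0_min_support_fun:
  fixes K :: "'a::euclidean_space set"
  assumes K: "convex_body0 K"
  obtains w0 where "w0 \<in> sphere 0 1" "0 < support_fun K w0"
    "\<forall>x\<in>sphere 0 1. support_fun K w0 \<le> support_fun K x"
proof -
  have "sphere (0::'a) 1 \<noteq> {}" by simp
  then obtain w0 where w0: "w0 \<in> sphere 0 1" "\<forall>x\<in>sphere 0 1. support_fun K w0 \<le> support_fun K x"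
    using continuous_attains_inf[OF compact_sphere _ continuous_on_support_fun[OF convex_body0D(1,4)[OF K]]]
    by blast
  obtain m R where "0 < m" "\<And>x. x \<in> sphere 0 1 \<Longrightarrow> m \<le> support_fun K x \<and> support_fun K x \<le> R"
    using convex_body0_bounds_on_sphere[OF K] by metis
  then show ?thesis using that w0 by force
qed

lemma radial_fun_le_scaled:
  fixes K1 K2 :: "'a::euclidean_space set"
  assumes K1: "convex_body0 K1" and K2: "convex_body0 K2" and "\<beta> > 0" "u \<noteq> 0"
    and "\<And>y. y \<in> K1 \<Longrightarrow> y /\<^sub>R \<beta> \<in> K2"
  shows "radial_fun K1 u \<le> \<beta> * radial_fun K2 u"
proof -
  have "(radial_fun K1 u / \<beta>) *\<^sub>R u \<in> K2"
    using assms(5)[OF radial_fun_scaleR_mem[OF K1 \<open>u \<noteq> 0\<close>]] by (simp add: divide_inverse_commute)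
  then have "radial_fun K1 u / \<beta> \<le> radial_fun K2 u"
    using le_radial_fun_iff[OF K2 \<open>u \<noteq> 0\<close>] radial_fun_pos[OF K1 \<open>u \<noteq> 0\<close>] \<open>\<beta> > 0\<close> by simp
  then show ?thesis using \<open>\<beta> > 0\<close> by (simp add: divide_le_eq mult.commute)
qed

section \<open>Wulff shapes and uniform limits of support functions\<close>

definition wulff_shape :: "('a::euclidean_space \<Rightarrow> real) \<Rightarrow> 'a set" where
  "wulff_shape G = {y. \<forall>x\<in>sphere 0 1. y \<bullet> x \<le> G x}"

lemma wulff_shape_subset_cball:
  fixes G :: "'a::euclidean_space \<Rightarrow> real"
  assumes "0 \<le> B" "\<And>x. x \<in> sphere 0 1 \<Longrightarrow> G x \<le> B"
  shows "wulff_shape G \<subseteq> cball 0 B"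
proof
  fix y assume y: "y \<in> wulff_shape G"
  show "y \<in> cball 0 B"
  proof (cases "y = 0")
    case False
    then have u: "y /\<^sub>R norm y \<in> sphere 0 1" by simp
    then have "y \<bullet> (y /\<^sub>R norm y) \<le> G (y /\<^sub>R norm y)" using y unfolding wulff_shape_def by blast
    also have "\<dots> \<le> B" using assms(2)[OF u] .
    finally show ?thesis using False by (simp add: dot_square_norm power2_eq_square field_simps)
  qed (use assms(1) in simp)
qed

lemma ball_subset_wulff_shape:
  fixes G :: "'a::euclidean_space \<Rightarrow> real"
  assumes "\<And>x. x \<in> sphere 0 1 \<Longrightarrow> m \<le> G x"
  shows "ball 0 m \<subseteq> wulff_shape G"
proof
  fix y :: 'a assume y: "y \<in> ball 0 m"
  have "y \<bullet> x \<le> G x" if x: "x \<in> sphere 0 1" for x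
    using norm_cauchy_schwarz[of y x] x y assms[OF x] by auto
  then show "y \<in> wulff_shape G" by (simp add: wulff_shape_def)
qed

lemma convex_body0_wulff_shape:
  fixes G :: "'a::euclidean_space \<Rightarrow> real"
  assumes "0 < m" and G: "\<And>x. x \<in> sphere 0 1 \<Longrightarrow> m \<le> G x \<and> G x \<le> B"
  shows "convex_body0 (wulff_shape G)"
proof -
  have eq: "wulff_shape G = (\<Inter>x\<in>sphere 0 1. {y. x \<bullet> y \<le> G x})"
    by (auto simp: wulff_shape_def inner_commute)
  obtain u :: 'a where "u \<in> sphere 0 1" using vector_choose_size[of 1] by auto
  then have "0 \<le> B" using G[of u] \<open>0 < m\<close> by auto
  then have "bounded (wulff_shape G)"
    using wulff_shape_subset_cball[where B = B and G = G] G by (meson bounded_cball bounded_subset)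
  moreover have "closed (wulff_shape G)" unfolding eq
    by (intro closed_INT ballI closed_halfspace_le)
  moreover have "convex (wulff_shape G)" unfolding eq
    by (intro convex_INT ballI convex_halfspace_le)
  moreover have "0 \<in> interior (wulff_shape G)"
    using ball_subset_wulff_shape[where G = G and m = m] G \<open>0 < m\<close> mem_interior by blast
  ultimately show ?thesis by (simp add: convex_body0_def compact_eq_bounded_closed)
qed

lemma support_fun_wulff_shape_le:
  assumes "convex_body0 (wulff_shape G)" "x \<in> sphere 0 1"
  shows "support_fun (wulff_shape G) x \<le> G x"
  using support_fun_attained[OF convex_body0D(1,4)[OF assms(1)], of x] assms(2)
  by (metis (no_types, lifting) mem_Collect_eq wulff_shape_def)

lemma support_fun_normalized_subseq_limit:
  fixes K :: "nat \<Rightarrow> 'a::euclidean_space set"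
  assumes K: "\<And>n. compact (K n)" "\<And>n. K n \<noteq> {}" "\<And>n. K n \<subseteq> cball 0 (R n)"
    and R: "\<And>n. 0 < R n" and "0 < m"
    and lower: "\<And>n x. x \<in> sphere 0 1 \<Longrightarrow> m * R n \<le> support_fun (K n) x"
  obtains G k where "strict_mono (k :: nat \<Rightarrow> nat)" "\<And>x. x \<in> sphere 0 1 \<Longrightarrow> m \<le> G x \<and> G x \<le> 1"
    "\<And>e. 0 < e \<Longrightarrow> \<exists>N. \<forall>n\<ge>N. \<forall>x\<in>sphere 0 1.
       \<bar>support_fun (K (k n)) x / R (k n) - G x\<bar> < e"
proof -
  define g where "g n x = support_fun (K n) x / R n" for n x
  have g_bounds: "m \<le> g n x \<and> g n x \<le> 1" if "x \<in> sphere 0 1" for n x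
    using lower[OF that, of n] support_fun_le_norm[OF K, of n x] that R[of n]
    by (simp add: g_def pos_le_divide_eq pos_divide_le_eq)
  have g_lipschitz: "\<bar>g n x - g n y\<bar> \<le> norm (x - y)" for n x y
    using support_fun_lipschitz[OF K, of n x y] R[of n]
    by (simp add: g_def diff_divide_distrib[symmetric] abs_div pos_divide_le_eq mult.commute)
  obtain G k where k: "strict_mono (k :: nat \<Rightarrow> nat)"
    and conv: "\<And>e. 0 < e \<Longrightarrow> \<exists>N. \<forall>n x. n \<ge> N \<and> x \<in> sphere 0 1 \<longrightarrow> norm (g (k n) x - G x) < e"
  proof (rule Arzela_Ascoli[where \<F>=g and M=1, OF compact_sphere])
    show "norm (g n x) \<le> 1" if "x \<in> sphere 0 1" for n x
      using g_bounds[OF that, of n] \<open>0 < m\<close> by simp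
    show "\<exists>d>0. \<forall>n y. y \<in> sphere 0 1 \<and> norm (x - y) < d \<longrightarrow> norm (g n x - g n y) < e"
      if "0 < e" for x e
      using that g_lipschitz by (intro exI[of _ e]) (auto intro: order.strict_trans1)
  qed blast
  have G_bounds: "m \<le> G x \<and> G x \<le> 1" if x: "x \<in> sphere 0 1" for x
  proof -
    have "m \<le> G x + e \<and> G x \<le> 1 + e" if "0 < e" for e
    proof -
      obtain N where "\<forall>n x. n \<ge> N \<and> x \<in> sphere 0 1 \<longrightarrow> norm (g (k n) x - G x) < e"
        using conv[OF \<open>0 < e\<close>] ..
      then show ?thesis using g_bounds[OF x, of "k N"] x by fastforce
    qed
    then show ?thesis by (meson field_le_epsilon)
  qed
  show ?thesis
    using that[OF k G_bounds] conv by (fastforce simp: g_def)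
qed

section \<open>Finite measures concentrated on the sphere\<close>

definition sphere_cap :: "real \<Rightarrow> 'a::euclidean_space \<Rightarrow> 'a set" where
  "sphere_cap d z = {u \<in> sphere 0 1. d < u \<bullet> z}"

definition caps_bounded_below :: "'a::euclidean_space measure \<Rightarrow> bool" where
  "caps_bounded_below N \<longleftrightarrow> (\<exists>d>0. \<exists>c>0. \<forall>z\<in>sphere 0 1. c \<le> measure N (sphere_cap d z))"

lemma sphere_cap_in_borel: "sphere_cap d z \<in> sets borel"
proof -
  have "sphere_cap d z = sphere 0 1 \<inter> {u. d < z \<bullet> u}"
    by (auto simp: sphere_cap_def inner_commute)
  then show ?thesis by (auto intro: borel_open open_halfspace_gt)
qed

locale sphere_finite_measure = finite_measure N for N :: "'a::euclidean_space measure" +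
  assumes sets_eq_borel: "sets N = sets borel"
    and null_outside_sphere: "emeasure N (- sphere 0 1) = 0"
begin

lemma measurable_from_borel:
  assumes "f \<in> borel_measurable borel"
  shows "f \<in> borel_measurable N"
  unfolding measurable_cong_sets[OF sets_eq_borel refl] by (rule assms)

lemma sets_sphere_cap: "sphere_cap d z \<in> sets N"
  using sets_eq_borel sphere_cap_in_borel by simp

lemma AE_in_sphere: "AE x in N. x \<in> sphere 0 1"
proof (rule AE_I'[of "- sphere 0 1"])
  show "- sphere (0::'a) 1 \<in> null_sets N"
    using null_outside_sphere sets_eq_borel by (simp add: null_sets_def)
qed auto

lemma integrable_bounded_on_sphere:
  fixes f :: "'a \<Rightarrow> real"
  assumes "f \<in> borel_measurable borel" "\<And>x. x \<in> sphere 0 1 \<Longrightarrow> \<bar>f x\<bar> \<le> B"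
  shows "integrable N f"
proof (rule integrable_const_bound)
  show "AE x in N. norm (f x) \<le> B"
    using AE_in_sphere by eventually_elim (use assms(2) in auto)
qed (rule measurable_from_borel[OF assms(1)])

lemma integral_mono_on_sphere:
  fixes f g :: "'a \<Rightarrow> real"
  assumes "integrable N f" "integrable N g" "\<And>x. x \<in> sphere 0 1 \<Longrightarrow> f x \<le> g x"
  shows "(\<integral>x. f x \<partial>N) \<le> (\<integral>x. g x \<partial>N)"
  using assms(1,2) by (rule integral_mono_AE) (use AE_in_sphere assms(3) in auto)

lemma integrable_ln_support_fun:
  assumes K: "convex_body0 K"
  shows "integrable N (\<lambda>x. ln (support_fun K x))"
proof -
  obtain m R where "0 < m" "\<And>x. x \<in> sphere 0 1 \<Longrightarrow> m \<le> support_fun K x \<and> support_fun K x \<le> R"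
    using convex_body0_bounds_on_sphere[OF K] by metis
  then have "\<bar>ln (support_fun K x)\<bar> \<le> \<bar>ln m\<bar> + \<bar>ln R\<bar>" if "x \<in> sphere 0 1" for x
    using that ln_mono[of m "support_fun K x"] ln_mono[of "support_fun K x" R] by force
  moreover have "(\<lambda>x. ln (support_fun K x)) \<in> borel_measurable borel"
    by (intro borel_measurable_ln borel_measurable_continuous_onI continuous_on_support_fun
        convex_body0D[OF K])
  ultimately show ?thesis by (intro integrable_bounded_on_sphere)
qed

lemma integrable_radial_fun_powr:
  assumes K: "convex_body0 K"
  shows "integrable N (\<lambda>x. radial_fun K x powr q)"
proof -
  obtain m R where "0 < m" and bounds: "\<And>x. x \<in> sphere 0 1 \<Longrightarrow> m \<le> radial_fun K x \<and> radial_fun K x \<le> R"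
    using convex_body0_bounds_on_sphere[OF K] by metis
  have "\<bar>radial_fun K x powr q\<bar> \<le> m powr q + R powr q" if "x \<in> sphere 0 1" for x
  proof (cases "0 \<le> q")
    case True
    then have "radial_fun K x powr q \<le> R powr q"
      using bounds[OF that] \<open>0 < m\<close> by (intro powr_mono2) auto
    then show ?thesis by (simp add: add_increasing)
  next
    case False
    then have "radial_fun K x powr q \<le> m powr q"
      using bounds[OF that] \<open>0 < m\<close> by (intro powr_mono2') auto
    then show ?thesis by (simp add: add_increasing2)
  qed
  moreover have "(\<lambda>x. radial_fun K x powr q) \<in> borel_measurable borel"
    using borel_measurable_radial_fun[OF K] by measurable
  ultimately show ?thesis by (intro integrable_bounded_on_sphere)
qed

lemma integral_radial_fun_powr_pos:
  assumes K: "convex_body0 K" and "0 < measure N (space N)"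
  shows "0 < (\<integral>x. radial_fun K x powr q \<partial>N)"
proof -
  have pos: "AE x in N. 0 < radial_fun K x powr q"
    using AE_in_sphere
  proof eventually_elim
    case (elim x)
    then have "x \<noteq> 0" by auto
    then show ?case using radial_fun_pos[OF K \<open>x \<noteq> 0\<close>] by simp
  qed
  have "(\<integral>x. radial_fun K x powr q \<partial>N) \<noteq> 0"
  proof
    assume "(\<integral>x. radial_fun K x powr q \<partial>N) = 0"
    then have "AE x in N. radial_fun K x powr q = 0"
      using integral_nonneg_eq_0_iff_AE[OF integrable_radial_fun_powr[OF K]] pos
      by (auto elim: eventually_mono)
    with pos have "AE x in N. False" by eventually_elim simp
    then have "emeasure N (space N) = 0" using ae_filter_eq_bot_iff trivial_limit_def by metis
    then show False using assms(2) by (simp add: emeasure_eq_measure)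
  qed
  moreover have "0 \<le> (\<integral>x. radial_fun K x powr q \<partial>N)" by simp
  ultimately show ?thesis by linarith
qed

lemma measure_space_pos_if_caps_bounded_below:
  assumes "caps_bounded_below N"
  shows "0 < measure N (space N)"
proof -
  obtain d c where "0 < c" "\<forall>z\<in>sphere 0 1. c \<le> measure N (sphere_cap d z)"
    using assms by (auto simp: caps_bounded_below_def)
  moreover obtain u :: 'a where "u \<in> sphere 0 1" using vector_choose_size[of 1] by auto
  ultimately show ?thesis using bounded_measure[of "sphere_cap d u"] by fastforce
qed

lemma integral_ln_support_fun_ge:
  assumes K: "convex_body0 K" and y0: "y0 \<in> K" "y0 \<noteq> 0"
    and r: "0 < r" "\<And>x. x \<in> sphere 0 1 \<Longrightarrow> r \<le> support_fun K x"
    and "0 < t" "0 \<le> c" "c \<le> measure N (sphere_cap t (y0 /\<^sub>R norm y0))"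
  shows "measure N (space N) * ln r + c * (ln (norm y0 * t) - ln r) \<le> (\<integral>x. ln (support_fun K x) \<partial>N)"
proof -
  define C where "C = sphere_cap t (y0 /\<^sub>R norm y0)"
  define b where "b = max 0 (ln (norm y0 * t) - ln r)"
  have le: "ln r + b * indicator C x \<le> ln (support_fun K x)" if x: "x \<in> sphere 0 1" for x
  proof -
    have "ln r \<le> ln (support_fun K x)" using r(1) r(2)[OF x] by (intro ln_mono) auto
    moreover have "ln (norm y0 * t) \<le> ln (support_fun K x)" if "x \<in> C"
    proof -
      have "norm y0 * t < y0 \<bullet> x"
        using that y0(2) by (simp add: C_def sphere_cap_def inner_commute field_simps)
      also have "\<dots> \<le> support_fun K x" by (rule support_fun_ge[OF convex_body0D(1)[OF K] y0(1)])
      finally show ?thesis using y0(2) \<open>0 < t\<close> by (intro ln_mono less_imp_le) auto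
    qed
    ultimately show ?thesis by (cases "x \<in> C") (simp_all add: b_def max_def)
  qed
  have "c * (ln (norm y0 * t) - ln r) \<le> c * b"
    using \<open>0 \<le> c\<close> by (intro mult_left_mono) (auto simp: b_def)
  also have "\<dots> \<le> measure N C * b"
    using assms(8) by (intro mult_right_mono) (auto simp: b_def C_def)
  finally have "c * (ln (norm y0 * t) - ln r) \<le> b * measure N C" by (simp add: mult.commute)
  moreover have "(\<integral>x. ln r + b * indicator C x \<partial>N) = measure N (space N) * ln r + b * measure N C"
    by (simp add: C_def sets_sphere_cap emeasure_eq_measure mult.commute)
  moreover have "(\<integral>x. ln r + b * indicator C x \<partial>N) \<le> (\<integral>x. ln (support_fun K x) \<partial>N)"
    using le by (intro integral_mono_on_sphere integrable_ln_support_fun[OF K])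
      (auto simp: C_def sets_sphere_cap emeasure_eq_measure)
  ultimately show ?thesis by linarith
qed

lemma integral_radial_fun_powr_ge:
  assumes K: "convex_body0 K" and "w0 \<in> sphere 0 1" "0 < d" "0 \<le> p"
    and "0 \<le> c" "c \<le> measure N (sphere_cap d w0)"
  shows "c * (support_fun K w0 / d) powr - p \<le> (\<integral>x. radial_fun K x powr - p \<partial>N)"
proof -
  define D where "D = sphere_cap d w0"
  have le: "(support_fun K w0 / d) powr - p * indicator D u \<le> radial_fun K u powr - p"
    if "u \<in> sphere 0 1" for u
  proof (cases "u \<in> D")
    case True
    then have u: "u \<noteq> 0" "d < u \<bullet> w0" by (auto simp: D_def sphere_cap_def)
    have "radial_fun K u * d \<le> radial_fun K u * (u \<bullet> w0)"
      using radial_fun_pos[OF K u(1)] u(2) by simp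
    also have "\<dots> = (radial_fun K u *\<^sub>R u) \<bullet> w0" by simp
    also have "\<dots> \<le> support_fun K w0"
      by (rule support_fun_ge[OF convex_body0D(1)[OF K] radial_fun_scaleR_mem[OF K u(1)]])
    finally have "radial_fun K u \<le> support_fun K w0 / d" using \<open>0 < d\<close> by (simp add: field_simps)
    then show ?thesis
      using True radial_fun_pos[OF K u(1)] \<open>0 \<le> p\<close> by (simp add: powr_mono2')
  qed simp
  have "c * (support_fun K w0 / d) powr - p \<le> measure N D * (support_fun K w0 / d) powr - p"
    using assms(6) by (intro mult_right_mono) (auto simp: D_def)
  also have "\<dots> = (\<integral>u. (support_fun K w0 / d) powr - p * indicator D u \<partial>N)"
    by (simp add: D_def sets_sphere_cap mult.commute)
  also have "\<dots> \<le> (\<integral>u. radial_fun K u powr - p \<partial>N)"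
    using le by (intro integral_mono_on_sphere integrable_radial_fun_powr[OF K])
      (auto simp: D_def sets_sphere_cap emeasure_eq_measure)
  finally show ?thesis .
qed

lemma integral_ln_support_fun_mono:
  assumes K1: "convex_body0 K1" and K2: "convex_body0 K2" and "0 < \<alpha>"
    and h: "\<And>x. x \<in> sphere 0 1 \<Longrightarrow> \<alpha> * support_fun K2 x \<le> support_fun K1 x"
  shows "measure N (space N) * ln \<alpha> + (\<integral>x. ln (support_fun K2 x) \<partial>N)
    \<le> (\<integral>x. ln (support_fun K1 x) \<partial>N)"
proof -
  obtain m R where "0 < m" "\<And>x. x \<in> sphere 0 1 \<Longrightarrow> m \<le> support_fun K2 x \<and> support_fun K2 x \<le> R"
    using convex_body0_bounds_on_sphere[OF K2] by metis
  then have h2_pos: "\<And>x. x \<in> sphere 0 1 \<Longrightarrow> 0 < support_fun K2 x" by force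
  have "measure N (space N) * ln \<alpha> + (\<integral>x. ln (support_fun K2 x) \<partial>N)
      = (\<integral>x. ln \<alpha> + ln (support_fun K2 x) \<partial>N)"
    using integrable_ln_support_fun[OF K2] by simp
  also have "\<dots> \<le> (\<integral>x. ln (support_fun K1 x) \<partial>N)"
  proof (rule integral_mono_on_sphere)
    show "integrable N (\<lambda>x. ln \<alpha> + ln (support_fun K2 x))"
      using integrable_ln_support_fun[OF K2] by simp
    show "integrable N (\<lambda>x. ln (support_fun K1 x))" by (rule integrable_ln_support_fun[OF K1])
  next
    fix x :: 'a assume x: "x \<in> sphere 0 1"
    have "ln \<alpha> + ln (support_fun K2 x) = ln (\<alpha> * support_fun K2 x)"
      using \<open>0 < \<alpha>\<close> h2_pos[OF x] by (simp add: ln_mult)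
    also have "\<dots> \<le> ln (support_fun K1 x)"
      using h[OF x] \<open>0 < \<alpha>\<close> h2_pos[OF x] by (intro ln_mono) auto
    finally show "ln \<alpha> + ln (support_fun K2 x) \<le> ln (support_fun K1 x)" .
  qed
  finally show ?thesis .
qed

lemma integral_radial_fun_powr_mono:
  assumes K1: "convex_body0 K1" and K2: "convex_body0 K2" and "0 < \<beta>" "0 \<le> p"
    and r: "\<And>u. u \<in> sphere 0 1 \<Longrightarrow> radial_fun K1 u \<le> \<beta> * radial_fun K2 u"
  shows "\<beta> powr - p * (\<integral>u. radial_fun K2 u powr - p \<partial>N) \<le> (\<integral>u. radial_fun K1 u powr - p \<partial>N)"
proof -
  have "\<beta> powr - p * (\<integral>u. radial_fun K2 u powr - p \<partial>N) = (\<integral>u. (\<beta> * radial_fun K2 u) powr - p \<partial>N)"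
    using \<open>0 < \<beta>\<close> by (simp add: powr_mult)
  also have "\<dots> \<le> (\<integral>u. radial_fun K1 u powr - p \<partial>N)"
  proof (rule integral_mono_on_sphere)
    show "integrable N (\<lambda>u. (\<beta> * radial_fun K2 u) powr - p)"
      using integrable_radial_fun_powr[OF K2] \<open>0 < \<beta>\<close> by (simp add: powr_mult)
    show "integrable N (\<lambda>u. radial_fun K1 u powr - p)" by (rule integrable_radial_fun_powr[OF K1])
  next
    fix u :: 'a assume u: "u \<in> sphere 0 1"
    then have "u \<noteq> 0" by auto
    then show "(\<beta> * radial_fun K2 u) powr - p \<le> radial_fun K1 u powr - p"
      using r[OF u] radial_fun_pos[OF K1] \<open>0 \<le> p\<close> by (intro powr_mono2') auto
  qed
  finally show ?thesis .
qed

lemma caps_bounded_below_if_pointwise: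
  assumes pos: "\<And>w. w \<in> sphere 0 1 \<Longrightarrow> \<exists>s>0. 0 < measure N (sphere_cap s w)"
  shows "caps_bounded_below N"
proof -
  obtain s where s: "\<And>w. w \<in> sphere 0 1 \<Longrightarrow> 0 < s w \<and> 0 < measure N (sphere_cap (s w) w)"
    using pos by metis
  have "sphere 0 1 \<subseteq> (\<Union>w\<in>sphere 0 1. ball w (s w / 2))"
    using s by force
  then obtain F where F: "F \<subseteq> sphere 0 1" "finite F" "sphere 0 1 \<subseteq> (\<Union>w\<in>F. ball w (s w / 2))"
    using compactE_image[OF compact_sphere, of "sphere 0 1" "\<lambda>w. ball w (s w / 2)"] by blast
  have "F \<noteq> {}" using F(3) vector_choose_size[of 1] by fastforce
  define d where "d = Min ((\<lambda>w. s w / 2) ` F)"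
  define c where "c = Min ((\<lambda>w. measure N (sphere_cap (s w) w)) ` F)"
  have "0 < d" "0 < c" unfolding d_def c_def using F s \<open>F \<noteq> {}\<close> by (subst Min_gr_iff; force)+
  moreover have "c \<le> measure N (sphere_cap d z)" if z: "z \<in> sphere 0 1" for z
  proof -
    obtain w where w: "w \<in> F" "z \<in> ball w (s w / 2)" using F(3) z by blast
    have "sphere_cap (s w) w \<subseteq> sphere_cap d z"
    proof
      fix u assume u: "u \<in> sphere_cap (s w) w"
      have "u \<bullet> (w - z) \<le> norm u * norm (w - z)" by (rule norm_cauchy_schwarz)
      then have "u \<bullet> (w - z) < s w / 2" using u w by (auto simp: dist_norm sphere_cap_def)
      moreover have "d \<le> s w / 2" unfolding d_def using F w by (intro Min_le) auto
      ultimately show "u \<in> sphere_cap d z" using u by (auto simp: sphere_cap_def inner_diff_right)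
    qed
    then have "measure N (sphere_cap (s w) w) \<le> measure N (sphere_cap d z)"
      by (intro finite_measure_mono sets_sphere_cap)
    moreover have "c \<le> measure N (sphere_cap (s w) w)"
      unfolding c_def using F w by (intro Min_le) auto
    ultimately show ?thesis by linarith
  qed
  ultimately show ?thesis unfolding caps_bounded_below_def by blast
qed

lemma caps_bounded_below_if_open_pos:
  assumes pos: "\<And>A. openin (top_of_set (sphere 0 1)) A \<Longrightarrow> A \<noteq> {} \<Longrightarrow> emeasure N A > 0"
  shows "caps_bounded_below N"
proof (rule caps_bounded_below_if_pointwise)
  fix w :: 'a assume w: "w \<in> sphere 0 1"
  have "sphere_cap (1/2) w = sphere 0 1 \<inter> {u. 1/2 < w \<bullet> u}"
    by (auto simp: sphere_cap_def inner_commute)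
  moreover have "openin (top_of_set (sphere 0 1)) (sphere 0 1 \<inter> {u. 1/2 < w \<bullet> u})"
    by (intro openin_open_Int open_halfspace_gt)
  moreover have "w \<in> sphere 0 1 \<inter> {u. 1/2 < w \<bullet> u}" using w by (auto simp: dot_square_norm)
  ultimately have "0 < emeasure N (sphere_cap (1/2) w)" using pos by (metis empty_iff)
  then show "\<exists>s>0. 0 < measure N (sphere_cap s w)"
    by (intro exI[of _ "1/2"]) (simp add: emeasure_eq_measure)
qed

lemma caps_bounded_below_if_hemispheres:
  assumes pos: "\<And>v. v \<in> sphere 0 1 \<Longrightarrow> emeasure N {u \<in> sphere 0 1. u \<bullet> v < 0} > 0"
  shows "caps_bounded_below N"
proof (rule caps_bounded_below_if_pointwise)
  fix w :: 'a assume w: "w \<in> sphere 0 1"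
  have "{u \<in> sphere 0 1. u \<bullet> - w < 0} = (\<Union>n. sphere_cap (1 / Suc n) w)"
  proof safe
    fix u :: 'a assume "u \<in> sphere 0 1" "u \<bullet> - w < 0"
    then obtain n where "inverse (real (Suc n)) < u \<bullet> w" using reals_Archimedean by auto
    then show "u \<in> (\<Union>n. sphere_cap (1 / Suc n) w)"
      using \<open>u \<in> sphere 0 1\<close> by (auto simp: sphere_cap_def divide_inverse)
  qed (auto simp: sphere_cap_def intro: order.strict_trans[rotated])
  then have "emeasure N (\<Union>n. sphere_cap (1 / Suc n) w) \<noteq> 0" using pos[of "- w"] w by simp
  then obtain n where "emeasure N (sphere_cap (1 / Suc n) w) \<noteq> 0"
    using emeasure_UN_eq_0[of N "\<lambda>n. sphere_cap (1 / Suc n) w"] sets_sphere_cap by blast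
  then show "\<exists>s>0. 0 < measure N (sphere_cap s w)"
    by (intro exI[of _ "1 / Suc n"]) (simp add: emeasure_eq_measure less_le)
qed

end

section \<open>The functional on convex bodies\<close>

lemma ln_one_plus_minus_ln_one_minus_le:
  fixes e :: real
  assumes "0 < e" "e \<le> 1/2"
  shows "ln (1 + e) - ln (1 - e) \<le> 3 * e"
proof -
  have "ln (1 + e) \<le> e" using assms by (intro ln_add_one_self_le_self) auto
  moreover have "- ln (1 - e) = ln (1 / (1 - e))" using assms by (simp add: ln_div)
  moreover have "ln (1 / (1 - e)) \<le> 1 / (1 - e) - 1" using assms by (intro ln_le_minus_one) auto
  moreover have "1 / (1 - e) - 1 \<le> 2 * e" using assms by (simp add: field_simps)
  ultimately show ?thesis by linarith
qed

locale Phi_setting =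
  lam: sphere_finite_measure lam + mu: sphere_finite_measure mu
  for lam mu :: "'a::euclidean_space measure" +
  fixes p :: real
  assumes p_pos: "0 < p"
    and caps_lam: "caps_bounded_below lam"
    and caps_mu: "caps_bounded_below mu"
begin

abbreviation Phi_body :: "'a set \<Rightarrow> real" where
  "Phi_body K \<equiv> Phi lam mu p (radial_fun K)"

lemma total_mass_pos: "0 < total_mass lam" "0 < total_mass mu"
  using lam.measure_space_pos_if_caps_bounded_below[OF caps_lam]
    mu.measure_space_pos_if_caps_bounded_below[OF caps_mu]
  by (simp_all add: total_mass_def)

lemma Phi_body_eq:
  assumes "convex_body0 K"
  shows "Phi_body K = - (1 / total_mass lam) * (\<integral>x. ln (support_fun K x) \<partial>lam)
     - (1 / p) * ln ((1 / total_mass mu) * (\<integral>u. radial_fun K u powr - p \<partial>mu))"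
  unfolding Phi_def hull_of_radial_fun[OF assms] ..

lemma Phi_body_le_of_integral_bounds:
  assumes K: "convex_body0 K" and A: "A \<le> (\<integral>x. ln (support_fun K x) \<partial>lam)"
    and "0 < B" and B: "B \<le> (\<integral>u. radial_fun K u powr - p \<partial>mu)"
  shows "Phi_body K \<le> - A / total_mass lam - ln (B / total_mass mu) / p"
proof -
  have "- (1 / total_mass lam) * (\<integral>x. ln (support_fun K x) \<partial>lam) \<le> - A / total_mass lam"
    using A total_mass_pos(1) by (simp add: field_simps)
  moreover have "ln (B / total_mass mu) \<le> ln ((1 / total_mass mu) * (\<integral>u. radial_fun K u powr - p \<partial>mu))"
    using B \<open>0 < B\<close> total_mass_pos(2) by (intro ln_mono) (auto simp: field_simps)
  then have "- (1 / p) * ln ((1 / total_mass mu) * (\<integral>u. radial_fun K u powr - p \<partial>mu))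
      \<le> - ln (B / total_mass mu) / p"
    using p_pos by (simp add: field_simps)
  ultimately show ?thesis unfolding Phi_body_eq[OF K] by linarith
qed

lemma Phi_body_le_of_bounds:
  assumes K1: "convex_body0 K1" and K2: "convex_body0 K2" and "0 < \<alpha>" "0 < \<beta>"
    and h: "\<And>x. x \<in> sphere 0 1 \<Longrightarrow> \<alpha> * support_fun K2 x \<le> support_fun K1 x"
    and r: "\<And>u. u \<in> sphere 0 1 \<Longrightarrow> radial_fun K1 u \<le> \<beta> * radial_fun K2 u"
  shows "Phi_body K1 \<le> Phi_body K2 - ln \<alpha> + ln \<beta>"
proof -
  define L M where "L = total_mass lam" and "M = total_mass mu"
  define A2 B2 where "A2 = (\<integral>x. ln (support_fun K2 x) \<partial>lam)"
    and "B2 = (\<integral>u. radial_fun K2 u powr - p \<partial>mu)"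
  have LM: "0 < L" "0 < M" using total_mass_pos by (auto simp: L_def M_def)
  have "0 < B2"
    unfolding B2_def using mu.integral_radial_fun_powr_pos[OF K2] total_mass_pos(2)
    by (simp add: total_mass_def)
  have "Phi_body K1 \<le> - (L * ln \<alpha> + A2) / L - ln (\<beta> powr - p * B2 / M) / p"
    unfolding L_def M_def
  proof (rule Phi_body_le_of_integral_bounds[OF K1])
    show "total_mass lam * ln \<alpha> + A2 \<le> (\<integral>x. ln (support_fun K1 x) \<partial>lam)"
      using lam.integral_ln_support_fun_mono[OF K1 K2 \<open>0 < \<alpha>\<close> h]
      by (simp add: A2_def total_mass_def)
    show "\<beta> powr - p * B2 \<le> (\<integral>u. radial_fun K1 u powr - p \<partial>mu)"
      unfolding B2_def using p_pos by (intro mu.integral_radial_fun_powr_mono[OF K1 K2 \<open>0 < \<beta>\<close> _ r]) auto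
  qed (use \<open>0 < B2\<close> \<open>0 < \<beta>\<close> in simp)
  also have "\<dots> = - A2 / L - ln (B2 / M) / p - ln \<alpha> + ln \<beta>"
  proof -
    have "- (L * ln \<alpha> + A2) / L = - ln \<alpha> - A2 / L"
      using LM by (simp add: field_simps)
    moreover have "ln (\<beta> powr - p * B2 / M) = ln (B2 / M) - p * ln \<beta>"
      using LM \<open>0 < B2\<close> \<open>0 < \<beta>\<close> by (simp add: ln_mult ln_div ln_powr)
    then have "ln (\<beta> powr - p * B2 / M) / p = ln (B2 / M) / p - ln \<beta>"
      using p_pos by (simp add: diff_divide_distrib)
    ultimately show ?thesis by linarith
  qed
  also have "\<dots> = Phi_body K2 - ln \<alpha> + ln \<beta>"
    unfolding Phi_body_eq[OF K2] L_def M_def A2_def B2_def by simp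
  finally show ?thesis .
qed

lemma Phi_body_le_wulff_shape:
  assumes K: "convex_body0 K" and W: "convex_body0 (wulff_shape G)"
    and "0 < c" "0 < \<epsilon>" "\<epsilon> < 1"
    and close: "\<And>x. x \<in> sphere 0 1 \<Longrightarrow> \<bar>support_fun K x - c * G x\<bar> \<le> \<epsilon> * c * G x"
  shows "Phi_body K \<le> Phi_body (wulff_shape G) + ln (1 + \<epsilon>) - ln (1 - \<epsilon>)"
proof -
  have "Phi_body K \<le> Phi_body (wulff_shape G) - ln ((1 - \<epsilon>) * c) + ln ((1 + \<epsilon>) * c)"
  proof (rule Phi_body_le_of_bounds[OF K W])
    fix x :: 'a assume x: "x \<in> sphere 0 1"
    have "(1 - \<epsilon>) * c * support_fun (wulff_shape G) x \<le> (1 - \<epsilon>) * c * G x"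
      using support_fun_wulff_shape_le[OF W x] assms(3,5) by (intro mult_left_mono) auto
    also have "\<dots> \<le> support_fun K x" using close[OF x] by (simp add: algebra_simps)
    finally show "(1 - \<epsilon>) * c * support_fun (wulff_shape G) x \<le> support_fun K x" .
  next
    fix u :: 'a assume "u \<in> sphere 0 1"
    then have "u \<noteq> 0" by auto
    moreover have "y /\<^sub>R ((1 + \<epsilon>) * c) \<in> wulff_shape G" if "y \<in> K" for y
    proof -
      define \<beta> where "\<beta> = (1 + \<epsilon>) * c"
      have "0 < \<beta>" using assms(3,4) by (simp add: \<beta>_def)
      have "(y /\<^sub>R \<beta>) \<bullet> x \<le> G x" if "x \<in> sphere 0 1" for x
      proof -
        have "y \<bullet> x \<le> \<beta> * G x"
          using support_fun_ge[OF convex_body0D(1)[OF K] \<open>y \<in> K\<close>, of x] close[OF that]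
          by (simp add: \<beta>_def algebra_simps)
        then show ?thesis
          using \<open>0 < \<beta>\<close> by (simp add: field_simps)
      qed
      then show ?thesis by (simp add: wulff_shape_def \<beta>_def)
    qed
    ultimately show "radial_fun K u \<le> (1 + \<epsilon>) * c * radial_fun (wulff_shape G) u"
      using assms(3,4) by (intro radial_fun_le_scaled[OF K W]) auto
  qed (use assms(3-5) in auto)
  moreover have "- ln ((1 - \<epsilon>) * c) + ln ((1 + \<epsilon>) * c) = ln (1 + \<epsilon>) - ln (1 - \<epsilon>)"
    using assms(3-5) by (simp add: ln_mult)
  ultimately show ?thesis by linarith
qed

(* h_K exceeds t |y0| on sphere_cap t (y0 / |y0|), and rho_K is at most h_K(w0) / d on
   sphere_cap d w0. *)
lemma Phi_body_le_of_caps: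
  assumes K: "convex_body0 K" and y0: "y0 \<in> K" "y0 \<noteq> 0" and w0: "w0 \<in> sphere 0 1"
    and min: "\<forall>x\<in>sphere 0 1. support_fun K w0 \<le> support_fun K x"
    and t: "0 < t" "0 \<le> c1" "c1 \<le> measure lam (sphere_cap t (y0 /\<^sub>R norm y0))"
    and d: "0 < d" "0 < c2" "c2 \<le> measure mu (sphere_cap d w0)"
  shows "Phi_body K \<le> - (total_mass lam * ln (support_fun K w0)
      + c1 * (ln (norm y0 * t) - ln (support_fun K w0))) / total_mass lam
    - ln (c2 * (support_fun K w0 / d) powr - p / total_mass mu) / p"
proof (rule Phi_body_le_of_integral_bounds[OF K])
  obtain m R where "0 < m" "\<And>x. x \<in> sphere 0 1 \<Longrightarrow> m \<le> support_fun K x \<and> support_fun K x \<le> R"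
    using convex_body0_bounds_on_sphere[OF K] by metis
  then have "0 < support_fun K w0" using w0 by force
  then show "total_mass lam * ln (support_fun K w0) + c1 * (ln (norm y0 * t) - ln (support_fun K w0))
      \<le> (\<integral>x. ln (support_fun K x) \<partial>lam)"
    unfolding total_mass_def using t min
    by (intro lam.integral_ln_support_fun_ge[OF K y0]) auto
  show "0 < c2 * (support_fun K w0 / d) powr - p"
    using d \<open>0 < support_fun K w0\<close> by simp
qed (use d w0 p_pos in \<open>intro mu.integral_radial_fun_powr_ge[OF K w0]; simp\<close>)

lemma Phi_body_upper_bound:
  "\<exists>\<theta>>0. \<exists>C. \<forall>K y0 w0. convex_body0 K \<longrightarrow> y0 \<in> K \<longrightarrow> y0 \<noteq> 0 \<longrightarrow> w0 \<in> sphere 0 1 \<longrightarrow>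
     (\<forall>x\<in>sphere 0 1. support_fun K w0 \<le> support_fun K x) \<longrightarrow>
     Phi_body K \<le> C - \<theta> * ln (norm y0 / support_fun K w0)"
proof -
  obtain t c1 where t: "0 < t" "0 < c1" "\<forall>z\<in>sphere 0 1. c1 \<le> measure lam (sphere_cap t z)"
    using caps_lam by (auto simp: caps_bounded_below_def)
  obtain d c2 where d: "0 < d" "0 < c2" "\<forall>z\<in>sphere 0 1. c2 \<le> measure mu (sphere_cap d z)"
    using caps_mu by (auto simp: caps_bounded_below_def)
  define L M where "L = total_mass lam" and "M = total_mass mu"
  have LM: "0 < L" "0 < M" using total_mass_pos by (auto simp: L_def M_def)
  define \<theta> where "\<theta> = c1 / L"
  define C where "C = - \<theta> * ln t - ln (c2 / M) / p - ln d"
  have "Phi_body K \<le> C - \<theta> * ln (norm y0 / support_fun K w0)"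
    if K: "convex_body0 K" and y0: "y0 \<in> K" "y0 \<noteq> 0" and w0: "w0 \<in> sphere 0 1"
      and min: "\<forall>x\<in>sphere 0 1. support_fun K w0 \<le> support_fun K x"
    for K :: "'a set" and y0 w0 :: 'a
  proof -
    define r where "r = support_fun K w0"
    obtain m R where "0 < m" "\<And>x. x \<in> sphere 0 1 \<Longrightarrow> m \<le> support_fun K x \<and> support_fun K x \<le> R"
      using convex_body0_bounds_on_sphere[OF K] by metis
    then have "0 < r" using w0 by (force simp: r_def)
    have "y0 /\<^sub>R norm y0 \<in> sphere 0 1" using y0(2) by simp
    then have "Phi_body K \<le> - (L * ln r + c1 * (ln (norm y0 * t) - ln r)) / L
        - ln (c2 * (r / d) powr - p / M) / p"
      unfolding L_def M_def r_def using t d w0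
      by (intro Phi_body_le_of_caps[OF K y0 w0 min]) auto
    moreover have "- (L * ln r + c1 * (ln (norm y0 * t) - ln r)) / L
        = - ln r - \<theta> * ln (norm y0) - \<theta> * ln t + \<theta> * ln r"
      using LM t y0 by (simp add: \<theta>_def ln_mult add_divide_distrib diff_divide_distrib algebra_simps)
    moreover have "ln (c2 * (r / d) powr - p / M) = ln (c2 / M) - p * ln r + p * ln d"
      using LM d \<open>0 < r\<close> by (simp add: ln_mult ln_div ln_powr algebra_simps)
    then have "ln (c2 * (r / d) powr - p / M) / p = ln (c2 / M) / p - ln r + ln d"
      using p_pos by (simp add: add_divide_distrib diff_divide_distrib)
    moreover have "\<theta> * ln (norm y0 / r) = \<theta> * ln (norm y0) - \<theta> * ln r"
      using y0 \<open>0 < r\<close> by (simp add: ln_div algebra_simps)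
    ultimately show ?thesis unfolding C_def r_def by linarith
  qed
  moreover have "0 < \<theta>" using t LM by (simp add: \<theta>_def)
  ultimately show ?thesis by blast
qed

definition Phi_sup :: real where
  "Phi_sup = (SUP K\<in>Collect convex_body0. Phi_body K)"

lemma bdd_above_Phi_body: "bdd_above (Phi_body ` Collect convex_body0)"
proof -
  obtain \<theta> C where "0 < \<theta>" and bound: "\<forall>(K :: 'a set) y0 w0. convex_body0 K \<longrightarrow> y0 \<in> K \<longrightarrow>
      y0 \<noteq> 0 \<longrightarrow> w0 \<in> sphere 0 1 \<longrightarrow> (\<forall>x\<in>sphere 0 1. support_fun K w0 \<le> support_fun K x) \<longrightarrow>
      Phi_body K \<le> C - \<theta> * ln (norm y0 / support_fun K w0)"
    using Phi_body_upper_bound by metis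
  have le_C: "Phi_body K \<le> C" if K: "convex_body0 K" for K
  proof -
    obtain y0 where y0: "y0 \<in> K" "y0 \<noteq> 0" "K \<subseteq> cball 0 (norm y0)"
      using convex_body0_farthest_point[OF K] .
    obtain w0 where w0: "w0 \<in> sphere 0 1" "0 < support_fun K w0"
      "\<forall>x\<in>sphere 0 1. support_fun K w0 \<le> support_fun K x"
      using convex_body0_min_support_fun[OF K] .
    have "support_fun K w0 \<le> norm y0"
      using support_fun_le_norm[OF convex_body0D(1,4)[OF K] y0(3), of w0] w0(1) by simp
    then have "0 \<le> \<theta> * ln (norm y0 / support_fun K w0)"
      using w0(2) \<open>0 < \<theta>\<close> by simp
    then show ?thesis using bound[rule_format, OF K y0(1,2) w0(1) w0(3)[rule_format]] by linarith
  qed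
  show ?thesis by (rule bdd_aboveI2[where M = C]) (use le_C in blast)
qed

lemma Phi_body_le_Phi_sup:
  assumes "convex_body0 K"
  shows "Phi_body K \<le> Phi_sup"
  unfolding Phi_sup_def by (rule cSUP_upper) (use assms bdd_above_Phi_body in blast)+

lemma maximizing_sequence:
  obtains K :: "nat \<Rightarrow> 'a set"
  where "\<And>n. convex_body0 (K n)" "\<And>n. Phi_sup - 1 / Suc n < Phi_body (K n)"
proof -
  have "convex_body0 (cball (0::'a) 1)" by (rule convex_body0_cball) simp
  then have ne: "Collect convex_body0 \<noteq> ({} :: 'a set set)" by blast
  have "\<exists>K. convex_body0 K \<and> Phi_sup - 1 / Suc n < Phi_body K" for n
    using less_cSUP_iff[OF ne bdd_above_Phi_body, of "Phi_sup - 1 / Suc n", folded Phi_sup_def]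
    by simp
  then show ?thesis using that by metis
qed

lemma near_maximizers_not_eccentric:
  "\<exists>m>0. \<forall>K y0 w0. convex_body0 K \<longrightarrow> y0 \<in> K \<longrightarrow> y0 \<noteq> 0 \<longrightarrow> w0 \<in> sphere 0 1 \<longrightarrow>
     0 < support_fun K w0 \<longrightarrow> (\<forall>x\<in>sphere 0 1. support_fun K w0 \<le> support_fun K x) \<longrightarrow>
     Phi_sup - 1 \<le> Phi_body K \<longrightarrow> m * norm y0 \<le> support_fun K w0"
proof -
  obtain \<theta> C where "0 < \<theta>" and bound: "\<forall>(K :: 'a set) y0 w0. convex_body0 K \<longrightarrow> y0 \<in> K \<longrightarrow>
      y0 \<noteq> 0 \<longrightarrow> w0 \<in> sphere 0 1 \<longrightarrow> (\<forall>x\<in>sphere 0 1. support_fun K w0 \<le> support_fun K x) \<longrightarrow>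
      Phi_body K \<le> C - \<theta> * ln (norm y0 / support_fun K w0)"
    using Phi_body_upper_bound by metis
  define b where "b = (C - Phi_sup + 1) / \<theta>"
  have "exp (- b) * norm y0 \<le> support_fun K w0"
    if K: "convex_body0 K" and y0: "y0 \<in> K" "y0 \<noteq> 0" and w0: "w0 \<in> sphere 0 1"
      and pos: "0 < support_fun K w0"
      and min: "\<forall>x\<in>sphere 0 1. support_fun K w0 \<le> support_fun K x"
      and near: "Phi_sup - 1 \<le> Phi_body K"
    for K :: "'a set" and y0 w0 :: 'a
  proof -
    have "Phi_sup - 1 \<le> C - \<theta> * ln (norm y0 / support_fun K w0)"
      using near bound[rule_format, OF K y0 w0 min[rule_format]] by linarith
    then have "ln (norm y0 / support_fun K w0) \<le> b"
      using \<open>0 < \<theta>\<close> by (simp add: b_def field_simps)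
    then have "norm y0 / support_fun K w0 \<le> exp b"
      using y0(2) pos ln_le_cancel_iff[of "norm y0 / support_fun K w0" "exp b"] by simp
    then show ?thesis using pos by (simp add: exp_minus field_simps)
  qed
  then show ?thesis by (intro exI[of _ "exp (- b)"]) auto
qed

lemma normalized_maximizing_sequence:
  obtains K :: "nat \<Rightarrow> 'a set" and R :: "nat \<Rightarrow> real" and m :: real
  where "\<And>n. convex_body0 (K n)" "\<And>n. Phi_sup - 1 / Suc n < Phi_body (K n)"
    "\<And>n. 0 < R n" "\<And>n. K n \<subseteq> cball 0 (R n)" "0 < m"
    "\<And>n x. x \<in> sphere 0 1 \<Longrightarrow> m * R n \<le> support_fun (K n) x"
proof -
  obtain K where K: "\<And>n. convex_body0 (K n)" "\<And>n. Phi_sup - 1 / Suc n < Phi_body (K n)"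
    by (rule maximizing_sequence) blast
  have "\<exists>y0. y0 \<in> K n \<and> y0 \<noteq> 0 \<and> K n \<subseteq> cball 0 (norm y0)" for n
    by (rule convex_body0_farthest_point[OF K(1)]) blast
  then obtain Y where Y: "\<And>n. Y n \<in> K n" "\<And>n. Y n \<noteq> 0" "\<And>n. K n \<subseteq> cball 0 (norm (Y n))"
    by metis
  have "\<exists>w0. w0 \<in> sphere 0 1 \<and> 0 < support_fun (K n) w0 \<and>
      (\<forall>x\<in>sphere 0 1. support_fun (K n) w0 \<le> support_fun (K n) x)" for n
    by (rule convex_body0_min_support_fun[OF K(1)]) blast
  then obtain W where W: "\<And>n. W n \<in> sphere 0 1" "\<And>n. 0 < support_fun (K n) (W n)"
    "\<And>n. \<forall>x\<in>sphere 0 1. support_fun (K n) (W n) \<le> support_fun (K n) x"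
    by metis
  obtain m where "0 < m" and not_eccentric: "\<forall>(K :: 'a set) y0 w0. convex_body0 K \<longrightarrow> y0 \<in> K \<longrightarrow>
      y0 \<noteq> 0 \<longrightarrow> w0 \<in> sphere 0 1 \<longrightarrow> 0 < support_fun K w0 \<longrightarrow>
      (\<forall>x\<in>sphere 0 1. support_fun K w0 \<le> support_fun K x) \<longrightarrow>
      Phi_sup - 1 \<le> Phi_body K \<longrightarrow> m * norm y0 \<le> support_fun K w0"
    using near_maximizers_not_eccentric by metis
  have lower: "m * norm (Y n) \<le> support_fun (K n) x" if "x \<in> sphere 0 1" for n x
  proof -
    have "Phi_sup - 1 \<le> Phi_sup - 1 / Suc n" by (simp add: field_simps)
    then have "m * norm (Y n) \<le> support_fun (K n) (W n)"
      using not_eccentric K Y(1,2) W(1,2,3) less_imp_le[OF K(2)] by (meson order.trans)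
    also have "\<dots> \<le> support_fun (K n) x" using W(3)[of n] that by blast
    finally show ?thesis .
  qed
  show ?thesis
    by (rule that[OF K, of "\<lambda>n. norm (Y n)" m]) (use Y(2,3) \<open>0 < m\<close> lower in auto)
qed

lemma Phi_sup_le_wulff_shape_limit:
  assumes K: "\<And>n. convex_body0 (K n)" "\<And>n. Phi_sup - 1 / Suc n < Phi_body (K n)"
    and R: "\<And>n. 0 < R n" and "0 < m" and k: "strict_mono (k :: nat \<Rightarrow> nat)"
    and G: "\<And>x. x \<in> sphere 0 1 \<Longrightarrow> m \<le> G x \<and> G x \<le> 1"
    and conv: "\<And>e. 0 < e \<Longrightarrow> \<exists>N. \<forall>n\<ge>N. \<forall>x\<in>sphere 0 1.
       \<bar>support_fun (K (k n)) x / R (k n) - G x\<bar> < e"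
  shows "Phi_sup \<le> Phi_body (wulff_shape G)"
proof -
  have W: "convex_body0 (wulff_shape G)" by (rule convex_body0_wulff_shape[OF \<open>0 < m\<close> G])
  have approx: "Phi_sup \<le> Phi_body (wulff_shape G) + 4 * \<epsilon>" if \<epsilon>: "0 < \<epsilon>" "\<epsilon> \<le> 1/2" for \<epsilon>
  proof -
    have "0 < \<epsilon> * m" using \<epsilon> \<open>0 < m\<close> by simp
    then obtain N where N: "\<forall>n\<ge>N. \<forall>x\<in>sphere 0 1. \<bar>support_fun (K (k n)) x / R (k n) - G x\<bar> < \<epsilon> * m"
      using conv by blast
    define n0 where "n0 = max N (nat \<lceil>1 / \<epsilon>\<rceil>)"
    define j where "j = k n0"
    have "1 / \<epsilon> \<le> real (nat \<lceil>1 / \<epsilon>\<rceil>)" by (rule real_nat_ceiling_ge)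
    also have "\<dots> \<le> real j"
      using seq_suble[OF k, of n0] by (simp add: j_def n0_def)
    finally have "1 / Suc j \<le> \<epsilon>" using \<epsilon> by (simp add: field_simps)
    have "Phi_body (K j) \<le> Phi_body (wulff_shape G) + ln (1 + \<epsilon>) - ln (1 - \<epsilon>)"
    proof (rule Phi_body_le_wulff_shape[OF K(1) W R])
      fix x :: 'a assume x: "x \<in> sphere 0 1"
      have "\<bar>support_fun (K j) x / R j - G x\<bar> < \<epsilon> * m"
        using N x by (simp add: j_def n0_def)
      also have "\<dots> \<le> \<epsilon> * G x" using G[OF x] \<epsilon> by simp
      finally have "\<bar>support_fun (K j) x / R j - G x\<bar> \<le> \<epsilon> * G x" by simp
      then show "\<bar>support_fun (K j) x - R j * G x\<bar> \<le> \<epsilon> * R j * G x"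
        using R[of j] by (simp add: field_simps abs_div)
    qed (use \<epsilon> in auto)
    then show ?thesis
      using K(2)[of j] ln_one_plus_minus_ln_one_minus_le[OF \<epsilon>] \<open>1 / Suc j \<le> \<epsilon>\<close> by linarith
  qed
  show ?thesis
  proof (rule field_le_epsilon)
    fix e :: real assume "0 < e"
    then show "Phi_sup \<le> Phi_body (wulff_shape G) + e"
      using approx[of "min (1/2) (e / 4)"] by linarith
  qed
qed

theorem Phi_body_attains_max:
  obtains K0 where "convex_body0 K0" "\<And>K. convex_body0 K \<Longrightarrow> Phi_body K \<le> Phi_body K0"
proof -
  obtain K R m where K: "\<And>n. convex_body0 (K n)" "\<And>n. Phi_sup - 1 / Suc n < Phi_body (K n)"
    and R: "\<And>n. 0 < R n" "\<And>n. K n \<subseteq> cball 0 (R n)" and "0 < m"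
    and lower: "\<And>n x. x \<in> sphere 0 1 \<Longrightarrow> m * R n \<le> support_fun (K n) x"
    by (rule normalized_maximizing_sequence) blast
  show ?thesis
  proof (rule support_fun_normalized_subseq_limit[where K = K and R = R and m = m,
        OF convex_body0D(1)[OF K(1)] convex_body0D(4)[OF K(1)] R(2) R(1) \<open>0 < m\<close> lower])
    fix G and k :: "nat \<Rightarrow> nat"
    assume "strict_mono k" and G: "\<And>x. x \<in> sphere 0 1 \<Longrightarrow> m \<le> G x \<and> G x \<le> 1"
      and "\<And>e. 0 < e \<Longrightarrow> \<exists>N. \<forall>n\<ge>N. \<forall>x\<in>sphere 0 1.
        \<bar>support_fun (K (k n)) x / R (k n) - G x\<bar> < e"
    then have "Phi_sup \<le> Phi_body (wulff_shape G)"
      by (rule Phi_sup_le_wulff_shape_limit[OF K R(1) \<open>0 < m\<close>])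
    then show ?thesis
      using that[OF convex_body0_wulff_shape[OF \<open>0 < m\<close> G]] Phi_body_le_Phi_sup by fastforce
  qed
qed

end

theorem lemma5p2:
  fixes lam mu :: "'a::euclidean_space measure" and p :: real
  assumes "DIM('a) \<ge> 2"
    and "p > 0"
    and "sets lam = sets borel" and "sets mu = sets borel"
    and "finite_measure lam" and "finite_measure mu"
    and "emeasure lam (- sphere 0 1) = 0" and "emeasure mu (- sphere 0 1) = 0"
    and "absolutely_continuous sphere_measure lam"
    and "\<And>A. openin (top_of_set (sphere 0 1)) A \<Longrightarrow> A \<noteq> {} \<Longrightarrow> emeasure lam A > 0"
    and "\<And>v. v \<in> sphere 0 1 \<Longrightarrow> emeasure mu {u \<in> sphere 0 1. u \<bullet> v < 0} > 0"
  shows "\<exists>K0. convex_body0 K0 \<and>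
           (\<forall>K. convex_body0 K \<longrightarrow> Phi lam mu p (radial_fun K) \<le> Phi lam mu p (radial_fun K0))"
proof -
  have lam: "sphere_finite_measure lam" and mu: "sphere_finite_measure mu"
    using assms(3-8) by (auto intro!: sphere_finite_measure.intro sphere_finite_measure_axioms.intro)
  have "Phi_setting lam mu p"
    using assms(2) sphere_finite_measure.caps_bounded_below_if_open_pos[OF lam assms(10)]
      sphere_finite_measure.caps_bounded_below_if_hemispheres[OF mu assms(11)]
    by (intro Phi_setting.intro lam mu Phi_setting_axioms.intro)
  then show ?thesis by (rule Phi_setting.Phi_body_attains_max) blast
qed

end
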